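(* Let $\mathbb K=[-1,1]$ and let $H:[-1,1]\times\mathbb R\to\mathbb R$ with $H(x,0)=0$ for all $x$ satisfy (H1) and (H4). Then $v_-:=\lim_{p\to-\infty}\partial_pH(-1,p)$ and $v_+:=\lim_{p\to\infty}\partial_pH(1,p)$ exist with $v_-\ge0$, $v_+\le0$, one has $\lim_{p\to-\infty}H(-1,p)/p=v_-$ and $\lim_{p\to\infty}H(1,p)/p=v_+$, and $\partial_pH(-1,p)>0$, $\partial_pH(1,p)<0$ for all $p\in\mathbb R$. If moreover $H$ satisfies (H3), then for every $c\in\mathbb R$, every $(a,q)\in(-1,1)\times(0,\infty)$ and every $(b,r)\in(-1,1)\times(-\infty,0)$ the set $\big((Q^+_{a,q})^\circ\cup(Q^-_{b,r})^\circ\big)^c\cap H^{-1}((-\infty,c])$ is compact.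
   Context: Conditions, for $\mathbb K=[-1,1]$: (H1) $H$ is $C^2$ with $\partial_p^2H>0$ on $[-1,1]\times\mathbb R$ and is the restriction of a $C^2$ function on $(-1-\epsilon,1+\epsilon)\times\mathbb R$ for some $\epsilon>0$. (H3) for each compact $K\subseteq(-1,1)$, $\lim_{|p|\to\infty}\inf_{x\in K}H(x,p)/|p|=\infty$, and $\lim_{p\to\infty}H(-1,p)/p=\infty$, $\lim_{p\to-\infty}H(1,p)/(-p)=\infty$. (H4) $\lim_{x\to-1}\operatorname{argmin}_pH(x,p)=-\infty$ and $\lim_{x\to1}\operatorname{argmin}_pH(x,p)=+\infty$. Quadrants: $Q^+_{y,q}=\{(x,p)\in[-1,1]\times\mathbb R:x\ge y,p\ge q\}$, $Q^-_{y,q}=\{(x,p)\in[-1,1]\times\mathbb R:x\le y,p\le q\}$, interiors taken in $[-1,1]\times\mathbb R$; complements taken in $[-1,1]\times\mathbb R$. *)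

theory Defs
  imports "HOL-Analysis.Analysis"
begin

definition KR :: "(real \<times> real) set" where
  "KR = {-1..1} \<times> (UNIV :: real set)"

definition C1_on :: "(real \<times> real) set \<Rightarrow> (real \<times> real \<Rightarrow> real) \<Rightarrow> bool" where
  "C1_on U f \<longleftrightarrow> (\<exists>fx fp.
     (\<forall>z\<in>U. (f has_derivative (\<lambda>(h, k). fx z * h + fp z * k)) (at z)) \<and>
     continuous_on U fx \<and> continuous_on U fp)"

definition C2_on :: "(real \<times> real) set \<Rightarrow> (real \<times> real \<Rightarrow> real) \<Rightarrow> bool" where
  "C2_on U f \<longleftrightarrow> (\<exists>fx fp.
     (\<forall>z\<in>U. (f has_derivative (\<lambda>(h, k). fx z * h + fp z * k)) (at z)) \<and>
     C1_on U fx \<and> C1_on U fp)"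

definition H1 :: "(real \<Rightarrow> real \<Rightarrow> real) \<Rightarrow> bool" where
  "H1 H \<longleftrightarrow>
     (\<exists>\<epsilon>>0. \<exists>G. C2_on ({-1-\<epsilon><..<1+\<epsilon>} \<times> UNIV) G \<and>
                 (\<forall>x\<in>{-1..1}. \<forall>p. G (x, p) = H x p)) \<and>
     (\<forall>x\<in>{-1..1}. \<forall>p. deriv (deriv (H x)) p > 0)"

text \<open>Condition (H3).  The condition on the infimum over K is written out:
  "inf_{x in K} H(x,p)/|p| tends to infinity" means that for every M,
  eventually (|p| large) all x in K satisfy H(x,p)/|p| >= M.\<close>
definition H3 :: "(real \<Rightarrow> real \<Rightarrow> real) \<Rightarrow> bool" where
  "H3 H \<longleftrightarrow>
     (\<forall>K. compact K \<and> K \<subseteq> {-1<..<1} \<longrightarrow>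
        (\<forall>M. eventually (\<lambda>p. \<forall>x\<in>K. H x p / \<bar>p\<bar> \<ge> M) at_infinity)) \<and>
     filterlim (\<lambda>p. H (-1) p / p) at_top at_top \<and>
     filterlim (\<lambda>p. H 1 p / (- p)) at_top at_bot"

text \<open>argmin of a (strictly convex) function of p, with values in the extended
  reals: the minimiser if it exists, -\<infinity> if the function is nondecreasing
  without minimum, +\<infinity> otherwise (then it is decreasing).\<close>
definition argminp :: "(real \<Rightarrow> real) \<Rightarrow> ereal" where
  "argminp f = (if \<exists>p. \<forall>q. f p \<le> f q then ereal (THE p. \<forall>q. f p \<le> f q)
                else if mono f then -\<infinity> else \<infinity>)"

definition H4 :: "(real \<Rightarrow> real \<Rightarrow> real) \<Rightarrow> bool" where
  "H4 H \<longleftrightarrow>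
     ((\<lambda>x. argminp (H x)) \<longlongrightarrow> -\<infinity>) (at_right (-1)) \<and>
     ((\<lambda>x. argminp (H x)) \<longlongrightarrow> \<infinity>) (at_left 1)"

definition Qplus :: "real \<Rightarrow> real \<Rightarrow> (real \<times> real) set" where
  "Qplus y q = {(x, p). x \<in> {-1..1} \<and> x \<ge> y \<and> p \<ge> q}"

definition Qminus :: "real \<Rightarrow> real \<Rightarrow> (real \<times> real) set" where
  "Qminus y q = {(x, p). x \<in> {-1..1} \<and> x \<le> y \<and> p \<le> q}"

definition relint_KR :: "(real \<times> real) set \<Rightarrow> (real \<times> real) set" where
  "relint_KR S = (top_of_set KR) interior_of S"

end

theory Submission
  imports Defs
begin

text \<open>Write H_p for the partial derivative in p. (H4) pushes the minimiser of H x to -\<infinity> as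
  x \<rightarrow> -1, so H_p(x,p) > 0 for x near -1; continuity in x and strict convexity give
  H_p(-1,p) > 0, and symmetrically H_p(1,p) < 0. These derivatives are monotone and of one sign,
  hence converge at -\<infinity> resp. +\<infinity>, and by l'Hopital's rule H(-1,p)/p and H(1,p)/p have the
  same limits.

  For compactness, on [-1,a] every slope H_p(x,\<cdot>) eventually becomes positive (by (H3) in the
  interior, by the above at x = -1), uniformly in x by compactness of [-1,a]; so H \<le> c bounds p
  from above there, while outside the interior of the quadrant at (a,q) a point with p > q has
  x \<le> a; the lower bound for p is symmetric.\<close>

lemma has_real_derivative_second_partial:
  fixes F :: "real \<times> real \<Rightarrow> real"
  assumes "(F has_derivative (\<lambda>(h, k). A * h + B * k)) (at (x, p))"
  shows "((\<lambda>t. F (x, t)) has_real_derivative B) (at p)"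
proof -
  have "((\<lambda>t. (x, t)) has_derivative (\<lambda>k. (0, k))) (at p)"
    by (auto intro!: derivative_eq_intros)
  from has_derivative_compose[OF this assms]
  show ?thesis by (simp add: has_field_derivative_def)
qed

lemma mono_bdd_above_tendsto_at_top:
  fixes f :: "'a::linorder \<Rightarrow> 'b::{conditionally_complete_linorder, linorder_topology}"
  assumes "mono f" "bdd_above (range f)"
  shows "(f \<longlongrightarrow> (SUP p. f p)) at_top"
proof (rule increasing_tendsto)
  show "eventually (\<lambda>p. f p \<le> (SUP p. f p)) at_top"
    using assms(2) by (intro always_eventually allI cSUP_upper) auto
next
  fix y assume "y < (SUP p. f p)"
  then obtain p0 where "y < f p0" using less_cSUP_iff[OF _ assms(2)] by auto
  then show "eventually (\<lambda>p. y < f p) at_top"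
    unfolding eventually_at_top_linorder by (meson assms(1) monoD less_le_trans)
qed

lemma mono_bdd_below_tendsto_at_bot:
  fixes f :: "'a::linorder \<Rightarrow> 'b::{conditionally_complete_linorder, linorder_topology}"
  assumes "mono f" "bdd_below (range f)"
  shows "(f \<longlongrightarrow> (INF p. f p)) at_bot"
proof (rule decreasing_tendsto)
  show "eventually (\<lambda>p. (INF p. f p) \<le> f p) at_bot"
    using assms(2) by (intro always_eventually allI cINF_lower) auto
next
  fix y assume "(INF p. f p) < y"
  then obtain p0 where "f p0 < y" using cINF_less_iff[OF _ assms(2)] by auto
  then show "eventually (\<lambda>p. f p < y) at_bot"
    unfolding eventually_at_bot_linorder by (meson assms(1) monoD le_less_trans)
qed

lemma quotient_tendsto_at_top_of_deriv:
  fixes f f' :: "real \<Rightarrow> real"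
  assumes "\<And>p. (f has_real_derivative f' p) (at p)" "(f' \<longlongrightarrow> v) at_top"
  shows "((\<lambda>p. f p / p) \<longlongrightarrow> v) at_top"
  by (rule lhospital_at_top_at_top[where g'="\<lambda>_. 1" and f'=f'])
    (use assms in \<open>auto intro!: filterlim_ident derivative_eq_intros\<close>)

lemma quotient_tendsto_at_bot_of_deriv:
  fixes f f' :: "real \<Rightarrow> real"
  assumes "\<And>p. (f has_real_derivative f' p) (at p)" "(f' \<longlongrightarrow> v) at_bot"
  shows "((\<lambda>p. f p / p) \<longlongrightarrow> v) at_bot"
proof -
  have "((\<lambda>t. - f (- t)) has_real_derivative f' (- t)) (at t)" for t
    using DERIV_chain2[OF assms(1) DERIV_minus[OF DERIV_ident], of t] DERIV_minus by fastforce
  moreover have "((\<lambda>t. f' (- t)) \<longlongrightarrow> v) at_top"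
    using assms(2) unfolding filterlim_at_bot_mirror .
  ultimately have "((\<lambda>t. - f (- t) / t) \<longlongrightarrow> v) at_top"
    by (rule quotient_tendsto_at_top_of_deriv)
  then show ?thesis unfolding filterlim_at_bot_mirror by simp
qed

lemma critical_point_is_global_min:
  fixes f f' :: "real \<Rightarrow> real"
  assumes d: "\<And>p. (f has_real_derivative f' p) (at p)" and mono: "strict_mono f'"
    and m: "f' m = 0"
  shows "f m \<le> f q"
proof (cases q m rule: linorder_cases)
  case less
  then obtain z where "q < z" "z < m" "f m - f q = (m - q) * f' z"
    using MVT2[OF less, of f f'] d by blast
  moreover have "f' z < 0" using strict_monoD[OF mono \<open>z < m\<close>] m by simp
  ultimately show ?thesis by (smt (verit) mult_pos_neg)
next
  case greater
  then obtain z where "m < z" "z < q" "f q - f m = (q - m) * f' z"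
    using MVT2[OF greater, of f f'] d by blast
  moreover have "f' z > 0" using strict_monoD[OF mono \<open>m < z\<close>] m by simp
  ultimately show ?thesis by (smt (verit) mult_pos_pos)
qed simp

lemma global_min_is_critical_point:
  fixes f f' :: "real \<Rightarrow> real"
  assumes "\<And>p. (f has_real_derivative f' p) (at p)" "\<forall>q. f m \<le> f q"
  shows "f' m = 0"
  using DERIV_local_min[OF assms(1)[of m], of 1] assms(2) by auto

lemma argminp_eq_critical_point:
  fixes f f' :: "real \<Rightarrow> real"
  assumes d: "\<And>p. (f has_real_derivative f' p) (at p)" and mono: "strict_mono f'"
    and m: "f' m = 0"
  shows "argminp f = ereal m"
proof -
  have min: "\<forall>q. f m \<le> f q" using critical_point_is_global_min[OF d mono m] by blast
  have "(THE p. \<forall>q. f p \<le> f q) = m"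
  proof (rule the_equality)
    fix p assume "\<forall>q. f p \<le> f q"
    then have "f' p = f' m" using global_min_is_critical_point[OF d] m by simp
    then show "p = m" using strict_mono_eq[OF mono] by blast
  qed (fact min)
  with min show ?thesis unfolding argminp_def by auto
qed

lemma argminp_eq_MInf:
  fixes f f' :: "real \<Rightarrow> real"
  assumes d: "\<And>p. (f has_real_derivative f' p) (at p)" and pos: "\<And>p. f' p > 0"
  shows "argminp f = -\<infinity>"
proof -
  have "\<nexists>m. \<forall>q. f m \<le> f q" using global_min_is_critical_point[OF d] pos by (metis less_irrefl)
  moreover have "mono f"
    by (rule monoI) (metis DERIV_pos_imp_increasing d pos order.order_iff_strict)
  ultimately show ?thesis unfolding argminp_def by simp
qed

lemma argminp_eq_PInf:
  fixes f f' :: "real \<Rightarrow> real"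
  assumes d: "\<And>p. (f has_real_derivative f' p) (at p)" and neg: "\<And>p. f' p < 0"
  shows "argminp f = \<infinity>"
proof -
  have "\<nexists>m. \<forall>q. f m \<le> f q" using global_min_is_critical_point[OF d] neg by (metis less_irrefl)
  moreover have "f 1 < f 0" using DERIV_neg_imp_decreasing[of 0 1 f] d neg by auto
  then have "\<not> mono f" by (meson monoD not_le zero_le_one)
  ultimately show ?thesis unfolding argminp_def by simp
qed

lemma
  fixes f f' :: "real \<Rightarrow> real"
  assumes d: "\<And>p. (f has_real_derivative f' p) (at p)" and mono: "strict_mono f'"
    and cont: "continuous_on UNIV f'"
  shows argminp_less_iff: "argminp f < ereal p \<longleftrightarrow> f' p > 0"
    and argminp_greater_iff: "argminp f > ereal p \<longleftrightarrow> f' p < 0"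
proof -
  have "argminp f < ereal p" if "f' p > 0"
  proof (cases "\<exists>q<p. f' q \<le> 0")
    case True
    then obtain q where "q < p" "f' q \<le> 0" by blast
    with that obtain m where "q \<le> m" "m \<le> p" "f' m = 0"
      using IVT[of f' q 0 p] cont by (auto simp: continuous_on_eq_continuous_at)
    with that show ?thesis using argminp_eq_critical_point[OF d mono] by (cases "m = p") auto
  next
    case False
    then have "f' q > 0" for q
      using that strict_monoD[OF mono, of p q] by (cases q p rule: linorder_cases) auto
    then show ?thesis using argminp_eq_MInf[OF d] by simp
  qed
  moreover have "argminp f > ereal p" if "f' p < 0"
  proof (cases "\<exists>q>p. f' q \<ge> 0")
    case True
    then obtain q where "p < q" "f' q \<ge> 0" by blast
    with that obtain m where "p \<le> m" "m \<le> q" "f' m = 0"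
      using IVT[of f' p 0 q] cont by (auto simp: continuous_on_eq_continuous_at)
    with that show ?thesis using argminp_eq_critical_point[OF d mono] by (cases "m = p") auto
  next
    case False
    then have "f' q < 0" for q
      using that strict_monoD[OF mono, of q p] by (cases q p rule: linorder_cases) auto
    then show ?thesis using argminp_eq_PInf[OF d] by simp
  qed
  moreover have "argminp f = ereal p" if "f' p = 0"
    using argminp_eq_critical_point[OF d mono that] .
  ultimately show "argminp f < ereal p \<longleftrightarrow> f' p > 0" "argminp f > ereal p \<longleftrightarrow> f' p < 0"
    by (cases "f' p" "0::real" rule: linorder_cases; force)+
qed

lemma compact_uniform_positivity_point:
  fixes d :: "'a::topological_space \<Rightarrow> real \<Rightarrow> real"
  assumes S: "compact S"
    and cont: "\<And>p. continuous_on S (\<lambda>x. d x p)"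
    and mono: "\<And>x. x \<in> S \<Longrightarrow> mono (d x)"
    and ex: "\<And>x. x \<in> S \<Longrightarrow> \<exists>p. d x p > 0"
  shows "\<exists>P. \<forall>x\<in>S. d x P > 0"
proof -
  have "\<exists>T. open T \<and> T \<inter> S = (\<lambda>x. d x (real n)) -` {0<..} \<inter> S" for n
    using cont[of "real n"] unfolding continuous_on_open_invariant by auto
  then obtain T where T: "\<And>n. open (T n)" "\<And>n. T n \<inter> S = (\<lambda>x. d x (real n)) -` {0<..} \<inter> S"
    by metis
  have "S \<subseteq> (\<Union>n. T n)"
  proof
    fix x assume x: "x \<in> S"
    obtain p where "d x p > 0" using ex[OF x] by blast
    moreover have "d x p \<le> d x (real (nat \<lceil>p\<rceil>))"
      using mono[OF x] by (rule monoD) linarith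
    ultimately have "x \<in> T (nat \<lceil>p\<rceil>) \<inter> S" using T(2) x by simp
    then show "x \<in> (\<Union>n. T n)" by blast
  qed
  then obtain N where N: "finite N" "S \<subseteq> (\<Union>n\<in>N. T n)"
    using compactE_image[OF S, of UNIV T] T(1) by metis
  have "d x (real (Max N)) > 0" if x: "x \<in> S" for x
  proof -
    obtain n where n: "n \<in> N" "x \<in> T n" using N x by auto
    then have "d x (real n) > 0" using T(2)[of n] x by auto
    moreover have "d x (real n) \<le> d x (real (Max N))"
      using mono[OF x] by (rule monoD) (use n N in auto)
    ultimately show ?thesis by simp
  qed
  then show ?thesis by blast
qed

text \<open>Beyond a point P where all slopes are positive, every g x grows at least at the
  minimal slope over S, so the sublevel sets of the g x are uniformly bounded above.\<close>
lemma compact_sublevel_sets_uniformly_bounded_above: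
  fixes g d :: "'a::topological_space \<Rightarrow> real \<Rightarrow> real"
  assumes S: "compact S"
    and cg: "\<And>p. continuous_on S (\<lambda>x. g x p)"
    and cd: "\<And>p. continuous_on S (\<lambda>x. d x p)"
    and dg: "\<And>x p. x \<in> S \<Longrightarrow> (g x has_real_derivative d x p) (at p)"
    and mono: "\<And>x. x \<in> S \<Longrightarrow> mono (d x)"
    and ex: "\<And>x. x \<in> S \<Longrightarrow> \<exists>p. d x p > 0"
  shows "\<exists>B. \<forall>x\<in>S. \<forall>p. g x p \<le> c \<longrightarrow> p \<le> B"
proof (cases "S = {}")
  case False
  obtain P where P: "\<forall>x\<in>S. d x P > 0"
    using compact_uniform_positivity_point[OF S cd mono ex] by blast
  obtain x1 where "x1 \<in> S" and x1: "\<And>y. y \<in> S \<Longrightarrow> d x1 P \<le> d y P"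
    using continuous_attains_inf[OF S False cd[of P]] by blast
  obtain x2 where x2: "\<And>y. y \<in> S \<Longrightarrow> g x2 P \<le> g y P"
    using continuous_attains_inf[OF S False cg[of P]] by blast
  define \<delta> where "\<delta> = d x1 P"
  have "\<delta> > 0" unfolding \<delta>_def using P \<open>x1 \<in> S\<close> by blast
  have "p \<le> P + (c - g x2 P) / \<delta>" if x: "x \<in> S" and gc: "g x p \<le> c" and "P < p" for x p
  proof -
    obtain z where z: "P < z" "g x p - g x P = (p - P) * d x z"
      using MVT2[OF \<open>P < p\<close>, of "g x" "d x"] dg[OF x] by blast
    have "\<delta> \<le> d x z" unfolding \<delta>_def using x1[OF x] monoD[OF mono[OF x], of P z] z(1) by simp
    then have "(p - P) * \<delta> \<le> (p - P) * d x z" using \<open>P < p\<close> by simp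
    then have "(p - P) * \<delta> \<le> c - g x2 P" using z(2) gc x2[OF x] by linarith
    then have "p - P \<le> (c - g x2 P) / \<delta>" using \<open>\<delta> > 0\<close> by (simp add: pos_le_divide_eq)
    then show ?thesis by simp
  qed
  then have "\<forall>x\<in>S. \<forall>p. g x p \<le> c \<longrightarrow> p \<le> max P (P + (c - g x2 P) / \<delta>)"
    by (smt (verit))
  then show ?thesis by blast
qed simp

lemma deriv_takes_both_signs:
  fixes f f' :: "real \<Rightarrow> real"
  assumes d: "\<And>p. (f has_real_derivative f' p) (at p)" and "f 0 = 0"
    and pos: "eventually (\<lambda>p. f p > 0) at_infinity"
  shows "\<exists>p. f' p > 0" and "\<exists>p. f' p < 0"
proof -
  obtain b where b: "\<And>p. b \<le> norm p \<Longrightarrow> f p > 0"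
    using pos unfolding eventually_at_infinity by blast
  define p0 where "p0 = max b 1"
  have "p0 > 0" "f p0 > 0" "f (- p0) > 0" using b[of p0] b[of "- p0"] unfolding p0_def by auto
  obtain z where "0 < z" "f p0 - f 0 = (p0 - 0) * f' z"
    using MVT2[OF \<open>p0 > 0\<close>, of f f'] d by blast
  with \<open>f 0 = 0\<close> \<open>p0 > 0\<close> \<open>f p0 > 0\<close> have "f' z > 0" by (simp add: zero_less_mult_iff)
  then show "\<exists>p. f' p > 0" ..
  obtain w where "f 0 - f (- p0) = (0 - - p0) * f' w"
    using MVT2[of "- p0" 0 f f'] \<open>p0 > 0\<close> d by auto
  with \<open>f 0 = 0\<close> \<open>p0 > 0\<close> \<open>f (- p0) > 0\<close> have "p0 * f' w < 0" by simp
  with \<open>p0 > 0\<close> have "f' w < 0" by (simp add: mult_less_0_iff)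
  then show "\<exists>p. f' p < 0" ..
qed

lemma H1_partial_derivatives:
  assumes "H1 H"
  obtains gp gpp where "continuous_on KR (\<lambda>z. H (fst z) (snd z))" "continuous_on KR gp"
    "\<And>x p. x \<in> {-1..1} \<Longrightarrow> (H x has_real_derivative gp (x, p)) (at p)"
    "\<And>x p. x \<in> {-1..1} \<Longrightarrow> ((\<lambda>t. gp (x, t)) has_real_derivative gpp (x, p)) (at p)"
proof -
  obtain \<epsilon> G where "\<epsilon> > 0" and G2: "C2_on ({-1-\<epsilon><..<1+\<epsilon>} \<times> UNIV) G"
    and GH: "\<forall>x\<in>{-1..1}. \<forall>p. G (x, p) = H x p"
    using assms unfolding H1_def by blast
  define U where "U = {-1-\<epsilon><..<1+\<epsilon>} \<times> (UNIV :: real set)"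
  have KRU: "KR \<subseteq> U" using \<open>\<epsilon> > 0\<close> unfolding U_def KR_def by auto
  obtain gx gp where Gd: "\<forall>z\<in>U. (G has_derivative (\<lambda>(h, k). gx z * h + gp z * k)) (at z)"
    and "C1_on U gp"
    using G2 unfolding C2_on_def U_def by blast
  then obtain gpx gpp where gpd: "\<forall>z\<in>U. (gp has_derivative (\<lambda>(h, k). gpx z * h + gpp z * k)) (at z)"
    unfolding C1_on_def by blast
  have "continuous_on U G" "continuous_on U gp"
    using Gd gpd by (meson continuous_at_imp_continuous_on has_derivative_continuous)+
  then have cG: "continuous_on KR G" and cgp: "continuous_on KR gp"
    using KRU continuous_on_subset by blast+
  have cH: "continuous_on KR (\<lambda>z. H (fst z) (snd z))"
    by (rule continuous_on_eq[OF cG]) (use GH in \<open>auto simp: KR_def\<close>)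
  have "(H x has_real_derivative gp (x, p)) (at p)"
    and "((\<lambda>t. gp (x, t)) has_real_derivative gpp (x, p)) (at p)" if "x \<in> {-1..1}" for x p
  proof -
    have xp: "(x, p) \<in> U" using KRU that by (auto simp: KR_def)
    have "H x = (\<lambda>t. G (x, t))" using GH that by auto
    then show "(H x has_real_derivative gp (x, p)) (at p)"
      using has_real_derivative_second_partial[OF Gd[rule_format, OF xp]] by simp
    show "((\<lambda>t. gp (x, t)) has_real_derivative gpp (x, p)) (at p)"
      using has_real_derivative_second_partial[OF gpd[rule_format, OF xp]] .
  qed
  with cH cgp show ?thesis by (rule that)
qed

lemma
  assumes "H1 H"
  shows H1_continuous_on_KR: "continuous_on KR (\<lambda>z. H (fst z) (snd z))"
    and H1_continuous_on_slice: "continuous_on {-1..1} (\<lambda>x. H x p)"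
    and H1_continuous_on_deriv_slice: "continuous_on {-1..1} (\<lambda>x. deriv (H x) p)"
    and H1_has_deriv: "x \<in> {-1..1} \<Longrightarrow> (H x has_real_derivative deriv (H x) p) (at p)"
    and H1_continuous_deriv: "x \<in> {-1..1} \<Longrightarrow> continuous_on UNIV (deriv (H x))"
    and H1_strict_mono_deriv: "x \<in> {-1..1} \<Longrightarrow> strict_mono (deriv (H x))"
proof -
  obtain gp gpp where cH: "continuous_on KR (\<lambda>z. H (fst z) (snd z))" and cgp: "continuous_on KR gp"
    and D1: "\<And>x p. x \<in> {-1..1} \<Longrightarrow> (H x has_real_derivative gp (x, p)) (at p)"
    and D2: "\<And>x p. x \<in> {-1..1} \<Longrightarrow> ((\<lambda>t. gp (x, t)) has_real_derivative gpp (x, p)) (at p)"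
    using H1_partial_derivatives[OF assms] by blast
  have derivH: "deriv (H x) = (\<lambda>t. gp (x, t))" if "x \<in> {-1..1}" for x
    using D1[OF that] DERIV_imp_deriv by blast
  have slice: "continuous_on {-1..1} (\<lambda>x. f (x, t))" if "continuous_on KR f" for f :: "_ \<Rightarrow> real" and t
    by (rule continuous_on_compose2[OF that, of _ "\<lambda>x. (x, t)"]) (auto simp: KR_def intro!: continuous_intros)
  show "continuous_on KR (\<lambda>z. H (fst z) (snd z))" by (fact cH)
  show "continuous_on {-1..1} (\<lambda>x. H x p)" using slice[OF cH] by simp
  show "continuous_on {-1..1} (\<lambda>x. deriv (H x) p)"
    by (rule continuous_on_eq[OF slice[OF cgp, of p]]) (simp add: derivH)
  show "(H x has_real_derivative deriv (H x) p) (at p)" if x: "x \<in> {-1..1}"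
    using D1[OF x] derivH[OF x] by simp
  show "continuous_on UNIV (deriv (H x))" if x: "x \<in> {-1..1}"
  proof -
    have "isCont (\<lambda>t. gp (x, t)) t" for t using D2[OF x] by (rule DERIV_isCont)
    then show ?thesis unfolding derivH[OF x] by (simp add: continuous_at_imp_continuous_on)
  qed
  show "strict_mono (deriv (H x))" if x: "x \<in> {-1..1}"
  proof -
    have pos: "gpp (x, t) > 0" for t
    proof -
      have "deriv (deriv (H x)) t > 0" using assms x unfolding H1_def by auto
      then show ?thesis using DERIV_imp_deriv[OF D2[OF x]] derivH[OF x] by simp
    qed
    show ?thesis
      unfolding derivH[OF x]
      by (rule strict_monoI) (use DERIV_pos_imp_increasing D2[OF x] pos in blast)
  qed
qed

lemma
  assumes h1: "H1 H" and h4: "H4 H"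
  shows H4_deriv_left_pos: "deriv (H (-1)) p > 0"
    and H4_deriv_right_neg: "deriv (H 1) p < 0"
proof -
  have argmin: "argminp (H x) < ereal t \<longleftrightarrow> deriv (H x) t > 0"
    "argminp (H x) > ereal t \<longleftrightarrow> deriv (H x) t < 0" if "x \<in> {-1..1}" for x t
    using argminp_less_iff argminp_greater_iff H1_has_deriv[OF h1 that]
      H1_strict_mono_deriv[OF h1 that] H1_continuous_deriv[OF h1 that] by blast+
  have "deriv (H (-1)) t \<ge> 0" for t
  proof (rule tendsto_lowerbound)
    show "((\<lambda>x. deriv (H x) t) \<longlongrightarrow> deriv (H (-1)) t) (at_right (-1))"
      using continuous_on_Icc_at_rightD[OF H1_continuous_on_deriv_slice[OF h1]] by simp
    have "eventually (\<lambda>x. argminp (H x) < ereal t) (at_right (-1))"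
      using h4 unfolding H4_def by (intro order_tendstoD(2)[of _ "-\<infinity>"]) auto
    moreover have "eventually (\<lambda>x. x \<in> {-1<..<1}) (at_right (-1::real))"
      using eventually_at_right_real[of "-1" 1] by simp
    ultimately show "eventually (\<lambda>x. 0 \<le> deriv (H x) t) (at_right (-1))"
      by eventually_elim (use argmin in force)
  qed simp
  moreover have "deriv (H (-1)) (p - 1) < deriv (H (-1)) p"
    by (rule strict_monoD[OF H1_strict_mono_deriv[OF h1]]) auto
  ultimately show "deriv (H (-1)) p > 0" by (smt (verit))
  have "deriv (H 1) t \<le> 0" for t
  proof (rule tendsto_upperbound)
    show "((\<lambda>x. deriv (H x) t) \<longlongrightarrow> deriv (H 1) t) (at_left 1)"
      using continuous_on_Icc_at_leftD[OF H1_continuous_on_deriv_slice[OF h1]] by simp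
    have "eventually (\<lambda>x. argminp (H x) > ereal t) (at_left 1)"
      using h4 unfolding H4_def by (intro order_tendstoD(1)[of _ "\<infinity>"]) auto
    moreover have "eventually (\<lambda>x. x \<in> {-1<..<1}) (at_left (1::real))"
      using eventually_at_left_real[of "-1" 1] by simp
    ultimately show "eventually (\<lambda>x. deriv (H x) t \<le> 0) (at_left 1)"
      by eventually_elim (use argmin in force)
  qed simp
  moreover have "deriv (H 1) p < deriv (H 1) (p + 1)"
    by (rule strict_monoD[OF H1_strict_mono_deriv[OF h1]]) auto
  ultimately show "deriv (H 1) p < 0" by (smt (verit))
qed

lemma H3_deriv_takes_both_signs:
  assumes h1: "H1 H" and h3: "H3 H" and "H x 0 = 0" and x: "x \<in> {-1<..<1}"
  shows "\<exists>p. deriv (H x) p > 0" and "\<exists>p. deriv (H x) p < 0"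
proof -
  have "compact {x} \<and> {x} \<subseteq> {-1<..<1}" using x by simp
  then have "eventually (\<lambda>p. \<forall>y\<in>{x}. H y p / \<bar>p\<bar> \<ge> 1) at_infinity"
    using h3 unfolding H3_def by blast
  moreover have "eventually (\<lambda>p::real. p \<noteq> 0) at_infinity"
    unfolding eventually_at_infinity by (intro exI[of _ 1]) auto
  ultimately have "eventually (\<lambda>p. H x p > 0) at_infinity"
    by eventually_elim (simp add: le_divide_eq)
  with x H1_has_deriv[OF h1] \<open>H x 0 = 0\<close>
  show "\<exists>p. deriv (H x) p > 0" "\<exists>p. deriv (H x) p < 0"
    using deriv_takes_both_signs[of "H x" "deriv (H x)"] by auto
qed

lemma H3_H4_sublevel_bounded_above:
  assumes H0: "\<forall>x\<in>{-1..1}. H x 0 = 0" and h1: "H1 H" and h3: "H3 H" and h4: "H4 H"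
    and "a < 1"
  shows "\<exists>B. \<forall>x\<in>{-1..a}. \<forall>p. H x p \<le> c \<longrightarrow> p \<le> B"
proof (rule compact_sublevel_sets_uniformly_bounded_above[where d="\<lambda>x. deriv (H x)"])
  have sub: "{-1..a} \<subseteq> {-1..1}" using \<open>a < 1\<close> by auto
  show "continuous_on {-1..a} (\<lambda>x. H x p)" "continuous_on {-1..a} (\<lambda>x. deriv (H x) p)" for p
    using continuous_on_subset[OF H1_continuous_on_slice[OF h1] sub]
      continuous_on_subset[OF H1_continuous_on_deriv_slice[OF h1] sub] by auto
  show "(H x has_real_derivative deriv (H x) p) (at p)" if "x \<in> {-1..a}" for x p
    using H1_has_deriv[OF h1] that sub by blast
  show "mono (deriv (H x))" if "x \<in> {-1..a}" for x
    using H1_strict_mono_deriv[OF h1] that sub strict_mono_mono by blast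
  show "\<exists>p. deriv (H x) p > 0" if x: "x \<in> {-1..a}" for x
  proof (cases "x = -1")
    case False
    then show ?thesis using H3_deriv_takes_both_signs(1)[OF h1 h3] H0 x \<open>a < 1\<close> by force
  qed (use H4_deriv_left_pos[OF h1 h4] in blast)
qed simp

lemma H3_H4_sublevel_bounded_below:
  assumes H0: "\<forall>x\<in>{-1..1}. H x 0 = 0" and h1: "H1 H" and h3: "H3 H" and h4: "H4 H"
    and "b > -1"
  shows "\<exists>B. \<forall>x\<in>{b..1}. \<forall>p. H x p \<le> c \<longrightarrow> B \<le> p"
proof -
  have "\<exists>B. \<forall>x\<in>{b..1}. \<forall>p. H x (- p) \<le> c \<longrightarrow> p \<le> B"
  proof (rule compact_sublevel_sets_uniformly_bounded_above[where d="\<lambda>x p. - deriv (H x) (- p)"])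
    have sub: "{b..1} \<subseteq> {-1..1}" using \<open>b > -1\<close> by auto
    show "continuous_on {b..1} (\<lambda>x. H x (- p))" "continuous_on {b..1} (\<lambda>x. - deriv (H x) (- p))"
      for p using continuous_on_subset[OF H1_continuous_on_slice[OF h1] sub]
        continuous_on_subset[OF H1_continuous_on_deriv_slice[OF h1] sub]
      by (auto intro: continuous_on_minus)
    show "((\<lambda>p. H x (- p)) has_real_derivative - deriv (H x) (- p)) (at p)"
      if "x \<in> {b..1}" for x p
      using DERIV_chain2[OF H1_has_deriv[OF h1] DERIV_minus[OF DERIV_ident], of x p] that sub
      by auto
    show "mono (\<lambda>p. - deriv (H x) (- p))" if "x \<in> {b..1}" for x
      using H1_strict_mono_deriv[OF h1] that sub
      by (intro monoI) (simp add: strict_mono_less_eq subset_iff)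
    show "\<exists>p. - deriv (H x) (- p) > 0" if x: "x \<in> {b..1}" for x
    proof (cases "x = 1")
      case False
      then obtain p where "deriv (H x) p < 0"
        using H3_deriv_takes_both_signs(2)[OF h1 h3] H0 x \<open>b > -1\<close> by force
      then show ?thesis by (intro exI[of _ "- p"]) simp
    next
      case True
      then show ?thesis using H4_deriv_right_neg[OF h1 h4] by auto
    qed
  qed simp
  then obtain B where "\<forall>x\<in>{b..1}. \<forall>p. H x (- p) \<le> c \<longrightarrow> p \<le> B" ..
  then have "\<forall>x\<in>{b..1}. \<forall>p. H x p \<le> c \<longrightarrow> - B \<le> p" by (metis minus_minus neg_le_iff_le)
  then show ?thesis ..
qed

lemma Qplus_open_part_subset_relint:
  "KR \<inter> ({a<..} \<times> {q<..}) \<subseteq> relint_KR (Qplus a q)"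
  unfolding relint_KR_def
  by (rule interior_of_maximal) (auto simp: Qplus_def KR_def intro!: openin_open_Int open_Times)

lemma Qminus_open_part_subset_relint:
  "KR \<inter> ({..<b} \<times> {..<r}) \<subseteq> relint_KR (Qminus b r)"
  unfolding relint_KR_def
  by (rule interior_of_maximal) (auto simp: Qminus_def KR_def intro!: openin_open_Int open_Times)

lemma closed_KR: "closed KR"
  unfolding KR_def by (intro closed_Times) auto

lemma closed_KR_diff_relint:
  "closed (KR - (relint_KR A \<union> relint_KR B))"
proof -
  have "closedin (top_of_set KR) (KR - (relint_KR A \<union> relint_KR B))"
    by (intro closedin_diff openin_Un closedin_topspace[of "top_of_set KR", simplified])
      (auto simp: relint_KR_def openin_interior_of)
  then show ?thesis using closedin_closed_trans closed_KR by blast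
qed

lemma compact_sublevel_outside_quadrants:
  fixes H :: "real \<Rightarrow> real \<Rightarrow> real"
  assumes cont: "continuous_on KR (\<lambda>z. H (fst z) (snd z))"
    and B1: "\<forall>x\<in>{-1..a}. \<forall>p. H x p \<le> c \<longrightarrow> p \<le> B1"
    and B2: "\<forall>x\<in>{b..1}. \<forall>p. H x p \<le> c \<longrightarrow> B2 \<le> p"
  shows "compact ((KR - (relint_KR (Qplus a q) \<union> relint_KR (Qminus b r)))
                  \<inter> {z \<in> KR. H (fst z) (snd z) \<le> c})" (is "compact (?D \<inter> ?L)")
proof -
  have "?L = KR \<inter> (\<lambda>z. H (fst z) (snd z)) -` {..c}" by auto
  then have "closed ?L"
    using continuous_closed_preimage[OF cont closed_KR closed_atMost] by simp
  moreover have "?D \<inter> ?L \<subseteq> {-1..1} \<times> {min r B2..max q B1}"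
  proof (rule subrelI)
    fix x p assume "(x, p) \<in> ?D \<inter> ?L"
    then have z: "(x, p) \<in> ?D" "H x p \<le> c" by auto
    then have x: "x \<in> {-1..1}" by (simp add: KR_def)
    have "p \<le> max q B1"
    proof (rule ccontr)
      assume "\<not> p \<le> max q B1"
      then have "x \<le> a" using z Qplus_open_part_subset_relint[of a q] by force
      then show False using B1[rule_format, of x p] x z(2) \<open>\<not> p \<le> max q B1\<close> by auto
    qed
    moreover have "min r B2 \<le> p"
    proof (rule ccontr)
      assume "\<not> min r B2 \<le> p"
      then have "x \<ge> b" using z Qminus_open_part_subset_relint[of b r] by force
      then show False using B2[rule_format, of x p] x z(2) \<open>\<not> min r B2 \<le> p\<close> by auto
    qed
    ultimately show "(x, p) \<in> {-1..1} \<times> {min r B2..max q B1}" using x by simp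
  qed
  then have "bounded (?D \<inter> ?L)" by (rule bounded_subset[rotated]) (auto intro!: bounded_Times)
  ultimately show ?thesis
    using closed_KR_diff_relint by (simp add: compact_eq_bounded_closed closed_Int)
qed

theorem mainTheorem9:
  fixes H :: "real \<Rightarrow> real \<Rightarrow> real"
  assumes H0: "\<forall>x\<in>{-1..1}. H x 0 = 0"
    and h1: "H1 H"
    and h4: "H4 H"
  shows "(\<exists>vm vp.
            ((\<lambda>p. deriv (H (-1)) p) \<longlongrightarrow> vm) at_bot \<and>
            ((\<lambda>p. deriv (H 1) p) \<longlongrightarrow> vp) at_top \<and>
            vm \<ge> 0 \<and> vp \<le> 0 \<and>
            ((\<lambda>p. H (-1) p / p) \<longlongrightarrow> vm) at_bot \<and>
            ((\<lambda>p. H 1 p / p) \<longlongrightarrow> vp) at_top) \<and>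
         (\<forall>p. deriv (H (-1)) p > 0 \<and> deriv (H 1) p < 0) \<and>
         (H3 H \<longrightarrow>
            (\<forall>c a q b r. a \<in> {-1<..<1} \<and> q > 0 \<and> b \<in> {-1<..<1} \<and> r < 0 \<longrightarrow>
               compact ((KR - (relint_KR (Qplus a q) \<union> relint_KR (Qminus b r)))
                        \<inter> {z \<in> KR. H (fst z) (snd z) \<le> c})))"
proof -
  note pos = H4_deriv_left_pos[OF h1 h4] and neg = H4_deriv_right_neg[OF h1 h4]
  define vm where "vm = (INF p. deriv (H (-1)) p)"
  define vp where "vp = (SUP p. deriv (H 1) p)"
  have bdd: "bdd_below (range (deriv (H (-1))))" "bdd_above (range (deriv (H 1)))"
    using pos neg by (auto intro!: bdd_belowI2[where m=0] bdd_aboveI2[where M=0] less_imp_le)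
  have mono: "mono (deriv (H (-1)))" "mono (deriv (H 1))"
    by (simp_all add: H1_strict_mono_deriv[OF h1] strict_mono_mono)
  have lim: "(deriv (H (-1)) \<longlongrightarrow> vm) at_bot" "(deriv (H 1) \<longlongrightarrow> vp) at_top"
    unfolding vm_def vp_def
    using mono_bdd_below_tendsto_at_bot mono_bdd_above_tendsto_at_top mono bdd by blast+
  have "vm \<ge> 0" unfolding vm_def by (rule cINF_greatest) (auto intro: less_imp_le pos)
  moreover have "vp \<le> 0" unfolding vp_def by (rule cSUP_least) (auto intro: less_imp_le neg)
  moreover have "((\<lambda>p. H (-1) p / p) \<longlongrightarrow> vm) at_bot" "((\<lambda>p. H 1 p / p) \<longlongrightarrow> vp) at_top"
    using quotient_tendsto_at_bot_of_deriv[OF H1_has_deriv[OF h1] lim(1)]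
      quotient_tendsto_at_top_of_deriv[OF H1_has_deriv[OF h1] lim(2)] by auto
  moreover have "compact ((KR - (relint_KR (Qplus a q) \<union> relint_KR (Qminus b r)))
                        \<inter> {z \<in> KR. H (fst z) (snd z) \<le> c})"
    if h3: "H3 H" and "a < 1" "b > -1" for c a q b r
  proof -
    obtain B1 B2 where "\<forall>x\<in>{-1..a}. \<forall>p. H x p \<le> c \<longrightarrow> p \<le> B1"
      "\<forall>x\<in>{b..1}. \<forall>p. H x p \<le> c \<longrightarrow> B2 \<le> p"
      using H3_H4_sublevel_bounded_above[OF H0 h1 h3 h4 \<open>a < 1\<close>]
        H3_H4_sublevel_bounded_below[OF H0 h1 h3 h4 \<open>b > -1\<close>] by metis
    then show ?thesis by (rule compact_sublevel_outside_quadrants[OF H1_continuous_on_KR[OF h1]])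
  qed
  ultimately show ?thesis using lim pos neg by auto
qed

end
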